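(* Let $F:\mathsf V\to\mathsf W$ and $G:\mathsf W\to\mathsf V$ be morphisms of quantales, and assume that either $G\dashv F$ (as monotone maps), or $F\dashv G$ and $F$ is injective. Then for every Cauchy complete $\mathsf V$-category $X=(X,a)$, the $\mathsf W$-category $FX=(X,F\circ a)$ is Cauchy complete.
   Context: A quantale $(\mathsf V,\otimes,k)$ is a complete anti-symmetric lattice with an associative, commutative operation $\otimes$ with neutral element $k$ distributing over arbitrary suprema. A morphism of quantales $F:(\mathsf V,\otimes,k)\to(\mathsf W,\oplus,l)$ is a monotone map preserving all suprema with $F(u)\oplus F(v)=F(u\otimes v)$ and $F(k)=l$. $G\dashv F$ means $G(w)\le v\iff w\le F(v)$. A $\mathsf V$-category $(X,a)$ is a set with $a:X\times X\to\mathsf V$ such that $k\le a(x,x)$ and $a(x,y)\otimes a(y,z)\le a(x,z)$. A $\mathsf V$-module $\varphi:(X,a)\rightharpoonup(Y,b)$ is a map $X\times Y\to\mathsf V$ with $a(x,x')\otimes\varphi(x',y)\le\varphi(x,y)$ and $\varphi(x,y)\otimes b(y,y')\le\varphi(x,y')$; composition $(\psi\cdot\varphi)(x,z)=\bigvee_y\varphi(x,y)\otimes\psi(y,z)$; $\varphi\dashv\psi$ means $a\le\psi\cdot\varphi$ and $\varphi\cdot\psi\le b$. $E=(\{\star\},k)$. $X$ is Cauchy complete if every left adjoint module $\varphi:E\rightharpoonup X$ is of the form $y\mapsto a(x,y)$ for some $x\in X$. *)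

theory Defs
  imports Main
begin

definition quantale :: "('v::complete_lattice \<Rightarrow> 'v \<Rightarrow> 'v) \<Rightarrow> 'v \<Rightarrow> bool" where
  "quantale t k \<longleftrightarrow>
     (\<forall>u v w. t (t u v) w = t u (t v w)) \<and>
     (\<forall>u v. t u v = t v u) \<and>
     (\<forall>u. t k u = u \<and> t u k = u) \<and>
     (\<forall>u A. t u (Sup A) = Sup (t u ` A)) \<and>
     (\<forall>u A. t (Sup A) u = Sup ((\<lambda>v. t v u) ` A))"

definition quantale_morphism ::
  "('v::complete_lattice \<Rightarrow> 'v \<Rightarrow> 'v) \<Rightarrow> 'v \<Rightarrow> ('w::complete_lattice \<Rightarrow> 'w \<Rightarrow> 'w) \<Rightarrow> 'w
     \<Rightarrow> ('v \<Rightarrow> 'w) \<Rightarrow> bool" where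
  "quantale_morphism t k s l F \<longleftrightarrow>
     mono F \<and>
     (\<forall>A. F (Sup A) = Sup (F ` A)) \<and>
     (\<forall>u v. s (F u) (F v) = F (t u v)) \<and>
     F k = l"

definition adjoint :: "('w::order \<Rightarrow> 'v::order) \<Rightarrow> ('v \<Rightarrow> 'w) \<Rightarrow> bool" where
  "adjoint G F \<longleftrightarrow> (\<forall>w v. G w \<le> v \<longleftrightarrow> w \<le> F v)"

definition vcat :: "('v::complete_lattice \<Rightarrow> 'v \<Rightarrow> 'v) \<Rightarrow> 'v \<Rightarrow> 'x set \<Rightarrow> ('x \<Rightarrow> 'x \<Rightarrow> 'v) \<Rightarrow> bool" where
  "vcat t k X a \<longleftrightarrow>
     (\<forall>x\<in>X. k \<le> a x x) \<and>
     (\<forall>x\<in>X. \<forall>y\<in>X. \<forall>z\<in>X. t (a x y) (a y z) \<le> a x z)"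

text \<open>A module phi : E -> X (E = ({*},k)), represented by y |-> phi(*,y).\<close>
definition module_from_E :: "('v::complete_lattice \<Rightarrow> 'v \<Rightarrow> 'v) \<Rightarrow> 'v \<Rightarrow> 'x set \<Rightarrow> ('x \<Rightarrow> 'x \<Rightarrow> 'v)
     \<Rightarrow> ('x \<Rightarrow> 'v) \<Rightarrow> bool" where
  "module_from_E t k X a \<phi> \<longleftrightarrow>
     (\<forall>y\<in>X. t k (\<phi> y) \<le> \<phi> y) \<and>
     (\<forall>y\<in>X. \<forall>y'\<in>X. t (\<phi> y) (a y y') \<le> \<phi> y')"

text \<open>A module psi : X -> E, represented by x |-> psi(x,*).\<close>
definition module_to_E :: "('v::complete_lattice \<Rightarrow> 'v \<Rightarrow> 'v) \<Rightarrow> 'v \<Rightarrow> 'x set \<Rightarrow> ('x \<Rightarrow> 'x \<Rightarrow> 'v)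
     \<Rightarrow> ('x \<Rightarrow> 'v) \<Rightarrow> bool" where
  "module_to_E t k X a \<psi> \<longleftrightarrow>
     (\<forall>x\<in>X. \<forall>x'\<in>X. t (a x x') (\<psi> x') \<le> \<psi> x) \<and>
     (\<forall>x\<in>X. t (\<psi> x) k \<le> \<psi> x)"

text \<open>phi : E -> X is left adjoint: there is psi : X -> E with
  k = 1_E <= (psi . phi)(*,*) = Sup_y phi(*,y) (x) psi(y,*) and
  (phi . psi)(x,y) = psi(x,*) (x) phi(*,y) <= a(x,y).\<close>
definition left_adjoint_module_from_E ::
  "('v::complete_lattice \<Rightarrow> 'v \<Rightarrow> 'v) \<Rightarrow> 'v \<Rightarrow> 'x set \<Rightarrow> ('x \<Rightarrow> 'x \<Rightarrow> 'v) \<Rightarrow> ('x \<Rightarrow> 'v) \<Rightarrow> bool" where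
  "left_adjoint_module_from_E t k X a \<phi> \<longleftrightarrow>
     module_from_E t k X a \<phi> \<and>
     (\<exists>\<psi>. module_to_E t k X a \<psi> \<and>
          k \<le> Sup ((\<lambda>y. t (\<phi> y) (\<psi> y)) ` X) \<and>
          (\<forall>x\<in>X. \<forall>y\<in>X. t (\<psi> x) (\<phi> y) \<le> a x y))"

definition cauchy_complete :: "('v::complete_lattice \<Rightarrow> 'v \<Rightarrow> 'v) \<Rightarrow> 'v \<Rightarrow> 'x set \<Rightarrow> ('x \<Rightarrow> 'x \<Rightarrow> 'v) \<Rightarrow> bool" where
  "cauchy_complete t k X a \<longleftrightarrow>
     (\<forall>\<phi>. left_adjoint_module_from_E t k X a \<phi> \<longrightarrow> (\<exists>x\<in>X. \<forall>y\<in>X. \<phi> y = a x y))"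

end

theory Submission
  imports Defs
begin

text \<open>Pull an adjunction \<open>\<phi> \<stileturn> \<psi>\<close> of modules \<open>E \<rightharpoonup> FX\<close> back along \<open>G\<close>:
  since \<open>G \<circ> F \<le> id\<close> in both cases, \<open>G\<psi> \<otimes> G\<phi> \<le> G F a \<le> a\<close>, so \<open>(G\<phi>, G\<psi>)\<close> is an adjunction
  of modules \<open>E \<rightharpoonup> X\<close>, after closing it up under composition with \<open>a\<close> when \<open>G \<stileturn> F\<close>.
  Its left part is \<open>a(x,-)\<close> by Cauchy completeness. Pushed forward along \<open>F\<close> it becomes an
  adjunction on \<open>FX\<close> comparable with \<open>\<phi> \<stileturn> \<psi>\<close>, and comparable adjunctions coincide, so
  \<open>\<phi> = F a(x,-)\<close>.\<close>

definition module_adjunction ::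
  "('v::complete_lattice \<Rightarrow> 'v \<Rightarrow> 'v) \<Rightarrow> 'v \<Rightarrow> 'x set \<Rightarrow> ('x \<Rightarrow> 'x \<Rightarrow> 'v) \<Rightarrow> ('x \<Rightarrow> 'v) \<Rightarrow> ('x \<Rightarrow> 'v) \<Rightarrow> bool"
  where
  "module_adjunction t k X a \<phi> \<psi> \<longleftrightarrow>
     module_from_E t k X a \<phi> \<and> module_to_E t k X a \<psi> \<and>
     k \<le> (SUP y\<in>X. t (\<phi> y) (\<psi> y)) \<and>
     (\<forall>x\<in>X. \<forall>y\<in>X. t (\<psi> x) (\<phi> y) \<le> a x y)"

lemma left_adjoint_module_from_E_iff:
  "left_adjoint_module_from_E t k X a \<phi> \<longleftrightarrow> (\<exists>\<psi>. module_adjunction t k X a \<phi> \<psi>)"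
  unfolding left_adjoint_module_from_E_def module_adjunction_def by blast

lemma cauchy_complete_iff:
  "cauchy_complete t k X a \<longleftrightarrow>
     (\<forall>\<phi> \<psi>. module_adjunction t k X a \<phi> \<psi> \<longrightarrow> (\<exists>x\<in>X. \<forall>y\<in>X. \<phi> y = a x y))"
  unfolding cauchy_complete_def left_adjoint_module_from_E_iff by blast

lemma vcat_reflD: "vcat t k X a \<Longrightarrow> x \<in> X \<Longrightarrow> k \<le> a x x"
  unfolding vcat_def by blast

lemma vcat_transD: "vcat t k X a \<Longrightarrow> x \<in> X \<Longrightarrow> y \<in> X \<Longrightarrow> z \<in> X \<Longrightarrow> t (a x y) (a y z) \<le> a x z"
  unfolding vcat_def by blast

lemma quantale_morphismD:
  assumes "quantale_morphism t k s l F"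
  shows "mono F" "F (Sup A) = Sup (F ` A)" "s (F u) (F v) = F (t u v)" "F k = l"
  using assms unfolding quantale_morphism_def by blast+

lemma module_adjunction_image:
  assumes F: "quantale_morphism t k s l F" and adj: "module_adjunction t k X a \<phi> \<psi>"
  shows "module_adjunction s l X (\<lambda>x y. F (a x y)) (\<lambda>y. F (\<phi> y)) (\<lambda>x. F (\<psi> x))"
proof -
  note F_mono = monoD[OF quantale_morphismD(1)[OF F]]
  note F_mult = quantale_morphismD(3)[OF F] and F_unit = quantale_morphismD(4)[OF F, symmetric]
  have "l \<le> F (SUP y\<in>X. t (\<phi> y) (\<psi> y))"
    using adj F_mono unfolding F_unit module_adjunction_def by blast
  also have "\<dots> = (SUP y\<in>X. s (F (\<phi> y)) (F (\<psi> y)))"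
    by (simp add: quantale_morphismD(2)[OF F] image_comp comp_def F_mult)
  finally show ?thesis
    using adj F_mono
    unfolding module_adjunction_def module_from_E_def module_to_E_def F_unit F_mult by blast
qed

lemma adjoint_inj_left_inverse:
  assumes "adjoint F G" "mono F" "inj F"
  shows "G (F v) = v"
proof -
  have "v \<le> G (F v)" and FGF: "F (G (F v)) \<le> F v"
    using assms(1) unfolding adjoint_def by blast+
  then have "F (G (F v)) = F v" using assms(2) by (simp add: antisym monoD)
  then show ?thesis using assms(3) by (simp add: inj_eq)
qed

definition module_hull_from_E ::
  "('v::complete_lattice \<Rightarrow> 'v \<Rightarrow> 'v) \<Rightarrow> 'x set \<Rightarrow> ('x \<Rightarrow> 'x \<Rightarrow> 'v) \<Rightarrow> ('x \<Rightarrow> 'v) \<Rightarrow> 'x \<Rightarrow> 'v"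
  where "module_hull_from_E t X a \<phi> y = (SUP z\<in>X. t (\<phi> z) (a z y))"

definition module_hull_to_E ::
  "('v::complete_lattice \<Rightarrow> 'v \<Rightarrow> 'v) \<Rightarrow> 'x set \<Rightarrow> ('x \<Rightarrow> 'x \<Rightarrow> 'v) \<Rightarrow> ('x \<Rightarrow> 'v) \<Rightarrow> 'x \<Rightarrow> 'v"
  where "module_hull_to_E t X a \<psi> x = (SUP z\<in>X. t (a x z) (\<psi> z))"

locale commutative_quantale =
  fixes t :: "'v::complete_lattice \<Rightarrow> 'v \<Rightarrow> 'v" and k :: 'v
  assumes quantale: "quantale t k"
begin

lemma assoc: "t (t u v) w = t u (t v w)"
  using quantale unfolding quantale_def by blast

lemma commute: "t u v = t v u"
  using quantale unfolding quantale_def by blast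

lemma unit_left [simp]: "t k u = u" and unit_right [simp]: "t u k = u"
  using quantale unfolding quantale_def by blast+

lemma Sup_distrib_left: "t (Sup A) u = (SUP v\<in>A. t v u)"
  using quantale unfolding quantale_def by blast

lemma mono_left: "u \<le> u' \<Longrightarrow> t u v \<le> t u' v"
  using Sup_distrib_left[of "{u, u'}" v] by (simp add: sup.absorb2 le_iff_sup)

lemma mono_right: "v \<le> v' \<Longrightarrow> t u v \<le> t u v'"
  using mono_left by (simp add: commute[of u])

lemma mult_mono: "u \<le> u' \<Longrightarrow> v \<le> v' \<Longrightarrow> t u v \<le> t u' v'"
  using mono_left mono_right order_trans by blast

lemma Sup_mult_le: "(\<And>u. u \<in> A \<Longrightarrow> t u v \<le> c) \<Longrightarrow> t (Sup A) v \<le> c"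
  by (simp add: Sup_distrib_left SUP_least)

lemma mult_Sup_le: "(\<And>v. v \<in> B \<Longrightarrow> t u v \<le> c) \<Longrightarrow> t u (Sup B) \<le> c"
  using Sup_mult_le[of B u c] by (simp add: commute[of u])

lemma module_adjunction_left_le:
  assumes adj: "module_adjunction t k X b \<phi> \<psi>" and adj': "module_adjunction t k X b \<phi>' \<psi>'"
    and le: "\<And>x. x \<in> X \<Longrightarrow> \<psi> x \<le> \<psi>' x" and y: "y \<in> X"
  shows "\<phi>' y \<le> \<phi> y"
proof -
  have "\<phi>' y = t k (\<phi>' y)" by simp
  also have "\<dots> \<le> t (SUP z\<in>X. t (\<phi> z) (\<psi> z)) (\<phi>' y)"
    using adj mono_left unfolding module_adjunction_def by blast
  also have "\<dots> \<le> \<phi> y"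
  proof (rule Sup_mult_le, clarify)
    fix z assume z: "z \<in> X"
    have "t (t (\<phi> z) (\<psi> z)) (\<phi>' y) = t (\<phi> z) (t (\<psi> z) (\<phi>' y))" by (rule assoc)
    also have "\<dots> \<le> t (\<phi> z) (t (\<psi>' z) (\<phi>' y))" using le[OF z] mono_left mono_right by blast
    also have "\<dots> \<le> t (\<phi> z) (b z y)"
      using adj' z y mono_right unfolding module_adjunction_def by blast
    also have "\<dots> \<le> \<phi> y" using adj z y unfolding module_adjunction_def module_from_E_def by blast
    finally show "t (t (\<phi> z) (\<psi> z)) (\<phi>' y) \<le> \<phi> y" .
  qed
  finally show ?thesis .
qed

lemma vcat_dual: "vcat t k X a \<Longrightarrow> vcat t k X (\<lambda>x y. a y x)"
  unfolding vcat_def by (metis commute)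

lemma module_to_E_iff_dual: "module_to_E t k X a \<psi> \<longleftrightarrow> module_from_E t k X (\<lambda>x y. a y x) \<psi>"
  unfolding module_to_E_def module_from_E_def by (auto simp: commute)

lemma module_hull_to_E_dual: "module_hull_to_E t X a \<psi> = module_hull_from_E t X (\<lambda>x y. a y x) \<psi>"
  unfolding module_hull_to_E_def module_hull_from_E_def by (simp add: commute)

lemma le_module_hull_from_E:
  assumes "vcat t k X a" "y \<in> X"
  shows "\<phi> y \<le> module_hull_from_E t X a \<phi> y"
proof -
  have "\<phi> y \<le> t (\<phi> y) (a y y)" using mono_right[OF vcat_reflD[OF assms]] by simp
  then show ?thesis unfolding module_hull_from_E_def using assms(2) by (blast intro: SUP_upper2)
qed

lemma module_from_E_hull:
  assumes a: "vcat t k X a"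
  shows "module_from_E t k X a (module_hull_from_E t X a \<phi>)"
  unfolding module_from_E_def
proof (intro conjI ballI)
  fix y y' assume y: "y \<in> X" and y': "y' \<in> X"
  show "t (module_hull_from_E t X a \<phi> y) (a y y') \<le> module_hull_from_E t X a \<phi> y'"
    unfolding module_hull_from_E_def[of _ _ _ _ y]
  proof (rule Sup_mult_le, clarify)
    fix z assume z: "z \<in> X"
    have "t (t (\<phi> z) (a z y)) (a y y') \<le> t (\<phi> z) (a z y')"
      unfolding assoc using mono_right[OF vcat_transD[OF a z y y']] .
    also have "\<dots> \<le> module_hull_from_E t X a \<phi> y'"
      unfolding module_hull_from_E_def using z by (rule SUP_upper)
    finally show "t (t (\<phi> z) (a z y)) (a y y') \<le> module_hull_from_E t X a \<phi> y'" .
  qed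
qed simp

lemma le_module_hull_to_E: "vcat t k X a \<Longrightarrow> x \<in> X \<Longrightarrow> \<psi> x \<le> module_hull_to_E t X a \<psi> x"
  unfolding module_hull_to_E_dual by (rule le_module_hull_from_E[OF vcat_dual])

lemma module_to_E_hull: "vcat t k X a \<Longrightarrow> module_to_E t k X a (module_hull_to_E t X a \<psi>)"
  unfolding module_hull_to_E_dual module_to_E_iff_dual by (rule module_from_E_hull[OF vcat_dual])

lemma module_hull_counit:
  assumes a: "vcat t k X a" and counit: "\<And>x y. x \<in> X \<Longrightarrow> y \<in> X \<Longrightarrow> t (\<psi> x) (\<phi> y) \<le> a x y"
    and x: "x \<in> X" and y: "y \<in> X"
  shows "t (module_hull_to_E t X a \<psi> x) (module_hull_from_E t X a \<phi> y) \<le> a x y"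
  unfolding module_hull_to_E_def module_hull_from_E_def
proof (rule Sup_mult_le, clarify, rule mult_Sup_le, clarify)
  fix x' z assume x': "x' \<in> X" and z: "z \<in> X"
  have "t (t (a x x') (\<psi> x')) (t (\<phi> z) (a z y)) = t (a x x') (t (t (\<psi> x') (\<phi> z)) (a z y))"
    by (simp add: assoc)
  also have "\<dots> \<le> t (a x x') (t (a x' z) (a z y))"
    using mono_right mono_left counit[OF x' z] by blast
  also have "\<dots> \<le> t (a x x') (a x' y)" using mono_right vcat_transD[OF a x' z y] by blast
  also have "\<dots> \<le> a x y" using vcat_transD[OF a x x' y] .
  finally show "t (t (a x x') (\<psi> x')) (t (\<phi> z) (a z y)) \<le> a x y" .
qed

lemma module_adjunction_hull:
  assumes a: "vcat t k X a" and unit: "k \<le> (SUP y\<in>X. t (\<phi> y) (\<psi> y))"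
    and counit: "\<And>x y. x \<in> X \<Longrightarrow> y \<in> X \<Longrightarrow> t (\<psi> x) (\<phi> y) \<le> a x y"
  shows "module_adjunction t k X a (module_hull_from_E t X a \<phi>) (module_hull_to_E t X a \<psi>)"
proof -
  have "(SUP y\<in>X. t (\<phi> y) (\<psi> y))
          \<le> (SUP y\<in>X. t (module_hull_from_E t X a \<phi> y) (module_hull_to_E t X a \<psi> y))"
    using le_module_hull_from_E[OF a] le_module_hull_to_E[OF a] by (blast intro: SUP_mono mult_mono)
  then show ?thesis
    using unit module_from_E_hull[OF a] module_to_E_hull[OF a] module_hull_counit[OF a counit]
    unfolding module_adjunction_def by (blast intro: order_trans)
qed

end

lemma lift_module_adjunction_of_left_adjoint:
  assumes V: "quantale tV kV" and G: "quantale_morphism tW kW tV kV G"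
    and GF: "adjoint G F" and a: "vcat tV kV X a"
    and adj: "module_adjunction tW kW X (\<lambda>x y. F (a x y)) \<phi> \<psi>"
  shows "\<exists>\<phi>' \<psi>'. module_adjunction tV kV X a \<phi>' \<psi>' \<and> (\<forall>y\<in>X. \<phi> y \<le> F (\<phi>' y) \<and> \<psi> y \<le> F (\<psi>' y))"
proof -
  interpret V: commutative_quantale tV kV by (fact commutative_quantale.intro[OF V])
  have transpose: "G w \<le> v \<Longrightarrow> w \<le> F v" for w v
    using GF unfolding adjoint_def by blast
  have G_adj: "module_adjunction tV kV X (\<lambda>x y. G (F (a x y))) (\<lambda>y. G (\<phi> y)) (\<lambda>x. G (\<psi> x))"
    by (rule module_adjunction_image[OF G adj])
  have counit: "tV (G (\<psi> x)) (G (\<phi> y)) \<le> a x y" if "x \<in> X" "y \<in> X" for x y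
  proof -
    have "tV (G (\<psi> x)) (G (\<phi> y)) \<le> G (F (a x y))"
      using G_adj that unfolding module_adjunction_def by blast
    also have "\<dots> \<le> a x y" using GF unfolding adjoint_def by blast
    finally show ?thesis .
  qed
  have unit: "kV \<le> (SUP y\<in>X. tV (G (\<phi> y)) (G (\<psi> y)))"
    using G_adj unfolding module_adjunction_def by blast
  have "\<forall>y\<in>X. \<phi> y \<le> F (module_hull_from_E tV X a (\<lambda>y. G (\<phi> y)) y)
              \<and> \<psi> y \<le> F (module_hull_to_E tV X a (\<lambda>x. G (\<psi> x)) y)"
    using transpose V.le_module_hull_from_E[OF a, of _ "\<lambda>y. G (\<phi> y)"]
      V.le_module_hull_to_E[OF a, of _ "\<lambda>x. G (\<psi> x)"] by simp
  with V.module_adjunction_hull[OF a unit counit] show ?thesis by blast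
qed

lemma lift_module_adjunction_of_inj_right_adjoint:
  assumes F: "quantale_morphism tV kV tW kW F" and G: "quantale_morphism tW kW tV kV G"
    and FG: "adjoint F G" and inj: "inj F"
    and adj: "module_adjunction tW kW X (\<lambda>x y. F (a x y)) \<phi> \<psi>"
  shows "\<exists>\<phi>' \<psi>'. module_adjunction tV kV X a \<phi>' \<psi>' \<and> (\<forall>y\<in>X. F (\<phi>' y) \<le> \<phi> y \<and> F (\<psi>' y) \<le> \<psi> y)"
proof -
  have "G (F v) = v" for v
    by (rule adjoint_inj_left_inverse[OF FG quantale_morphismD(1)[OF F] inj])
  then have "module_adjunction tV kV X a (\<lambda>y. G (\<phi> y)) (\<lambda>x. G (\<psi> x))"
    using module_adjunction_image[OF G adj] by simp
  moreover have "F (G w) \<le> w" for w using FG unfolding adjoint_def by blast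
  ultimately show ?thesis by blast
qed

lemma cauchy_complete_image_if_lift:
  assumes W: "quantale tW kW" and F: "quantale_morphism tV kV tW kW F"
    and cc: "cauchy_complete tV kV X a"
    and lift: "\<And>\<phi> \<psi>. module_adjunction tW kW X (\<lambda>x y. F (a x y)) \<phi> \<psi> \<Longrightarrow>
       \<exists>\<phi>' \<psi>'. module_adjunction tV kV X a \<phi>' \<psi>' \<and>
         ((\<forall>y\<in>X. \<phi> y \<le> F (\<phi>' y) \<and> \<psi> y \<le> F (\<psi>' y)) \<or>
          (\<forall>y\<in>X. F (\<phi>' y) \<le> \<phi> y \<and> F (\<psi>' y) \<le> \<psi> y))"
  shows "cauchy_complete tW kW X (\<lambda>x y. F (a x y))"
  unfolding cauchy_complete_iff
proof (intro allI impI)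
  interpret W: commutative_quantale tW kW by (fact commutative_quantale.intro[OF W])
  fix \<phi> \<psi> assume adj: "module_adjunction tW kW X (\<lambda>x y. F (a x y)) \<phi> \<psi>"
  obtain \<phi>' \<psi>' where adj': "module_adjunction tV kV X a \<phi>' \<psi>'"
    and cmp: "(\<forall>y\<in>X. \<phi> y \<le> F (\<phi>' y) \<and> \<psi> y \<le> F (\<psi>' y)) \<or>
              (\<forall>y\<in>X. F (\<phi>' y) \<le> \<phi> y \<and> F (\<psi>' y) \<le> \<psi> y)"
    using lift[OF adj] by blast
  obtain x where x: "x \<in> X" and rep: "\<forall>y\<in>X. \<phi>' y = a x y"
    using cc adj' unfolding cauchy_complete_iff by blast
  note F_adj = module_adjunction_image[OF F adj']
  have "\<phi> y = F (\<phi>' y)" if y: "y \<in> X" for y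
    using cmp
  proof
    assume le: "\<forall>y\<in>X. \<phi> y \<le> F (\<phi>' y) \<and> \<psi> y \<le> F (\<psi>' y)"
    have "F (\<phi>' y) \<le> \<phi> y" using W.module_adjunction_left_le[OF adj F_adj _ y] le by blast
    with le y show ?thesis by (blast intro: antisym)
  next
    assume ge: "\<forall>y\<in>X. F (\<phi>' y) \<le> \<phi> y \<and> F (\<psi>' y) \<le> \<psi> y"
    have "\<phi> y \<le> F (\<phi>' y)" using W.module_adjunction_left_le[OF F_adj adj _ y] ge by blast
    with ge y show ?thesis by (blast intro: antisym)
  qed
  then show "\<exists>x\<in>X. \<forall>y\<in>X. \<phi> y = F (a x y)" using x rep by auto
qed

theorem corollary3p3:
  fixes tV :: "'v::complete_lattice \<Rightarrow> 'v \<Rightarrow> 'v" and kV :: 'v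
    and tW :: "'w::complete_lattice \<Rightarrow> 'w \<Rightarrow> 'w" and kW :: 'w
    and F :: "'v \<Rightarrow> 'w" and G :: "'w \<Rightarrow> 'v"
    and X :: "'x set" and a :: "'x \<Rightarrow> 'x \<Rightarrow> 'v"
  assumes "quantale tV kV" and "quantale tW kW"
    and "quantale_morphism tV kV tW kW F" and "quantale_morphism tW kW tV kV G"
    and "adjoint G F \<or> (adjoint F G \<and> inj F)"
    and "vcat tV kV X a" and "cauchy_complete tV kV X a"
  shows "cauchy_complete tW kW X (\<lambda>x y. F (a x y))"
  using assms(5)
proof
  assume "adjoint G F"
  then show ?thesis
    using lift_module_adjunction_of_left_adjoint[OF assms(1,4) _ assms(6)]
    by (intro cauchy_complete_image_if_lift[OF assms(2,3,7)]) blast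
next
  assume "adjoint F G \<and> inj F"
  then show ?thesis
    using lift_module_adjunction_of_inj_right_adjoint[OF assms(3,4)]
    by (intro cauchy_complete_image_if_lift[OF assms(2,3,7)]) blast
qed

end
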